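(* Let $k\ge 0$ be an integer and let $a,b,c\in\mathbb{C}$ be such that no lower parameter below is a nonpositive integer (in particular $b,c\notin\{0,-1,-2,\dots\}$ and $1+a-b,1+a-c\notin\{0,-1,-2,\dots\}$). Define $$Q_k^{(2)}(n;a;b,c)={}_3F_2\!\left[\begin{matrix}-n,\ n+a,\ -k\\ b,\ c\end{matrix}\,\Big|\,1\right]=\sum_{j=0}^{k}\frac{(-n)_j(n+a)_j(-k)_j}{j!\,(b)_j(c)_j},$$ which is a polynomial of degree $2k$ in $n$ (and of degree $k$ in $\lambda=n(n+a)$). Then, as an identity of analytic functions in a neighborhood of $x=0$, $${}_3F_2\!\left[\begin{matrix}\tfrac a2,\ \tfrac12+\tfrac a2,\ 1-k+a-b-c\\ 1+a-b,\ 1+a-c\end{matrix}\,\Big|\,-\frac{4x}{(1-x)^2}\right]=(1-x)^a\sum_{n=0}^\infty\frac{(a)_n(b)_n(c)_n}{n!\,(1+a-b)_n(1+a-c)_n}\,Q_k^{(2)}(n;a;b,c)\,x^n .$$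
   Context: $(c)_n=c(c+1)\cdots(c+n-1)$, $(c)_0=1$, denotes the Pochhammer symbol. ${}_{p}F_{q}\!\left[\begin{smallmatrix}a_1,\dots,a_p\\ b_1,\dots,b_q\end{smallmatrix}\,\big|\,x\right]=\sum_{n\ge0}\frac{(a_1)_n\cdots(a_p)_n}{n!(b_1)_n\cdots(b_q)_n}x^n$ is the generalized hypergeometric series. Equivalently, the right-hand series equals a ${}_{3+2k}F_{2+2k}$ with extra upper parameters $1+\xi_i$ and lower parameters $\xi_i$, where $\xi_1,\dots,\xi_{2k}$ are the negated roots of $Q_k^{(2)}$. *)

theory Defs
  imports "HOL-Analysis.Analysis"
begin

definition hyp_coeff :: "complex list \<Rightarrow> complex list \<Rightarrow> nat \<Rightarrow> complex" where
  "hyp_coeff as bs n =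
     (\<Prod>a\<leftarrow>as. pochhammer a n) / (fact n * (\<Prod>b\<leftarrow>bs. pochhammer b n))"

definition pFq :: "complex list \<Rightarrow> complex list \<Rightarrow> complex \<Rightarrow> complex" where
  "pFq as bs z = (\<Sum>n. hyp_coeff as bs n * z ^ n)"

definition Qk2 :: "nat \<Rightarrow> nat \<Rightarrow> complex \<Rightarrow> complex \<Rightarrow> complex \<Rightarrow> complex" where
  "Qk2 k n a b c =
     (\<Sum>j=0..k. hyp_coeff [- of_nat n, of_nat n + a, - of_nat k] [b, c] j)"

end

theory Submission
  imports Defs "HOL-Complex_Analysis.Laurent_Convergence"
begin

text \<open>Both sides are power series in \<open>x\<close> near \<open>0\<close>, so it suffices to compare coefficients of
  the formal series. With \<open>z = -4x/(1-x)^2\<close>, the binomial series of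
  \<open>z^i (1-x)^(-a) = (-4)^i x^i (1-x)^(-a-2i)\<close> turns the coefficient of \<open>x^n\<close> on the left into a
  single sum over \<open>i \<le> n\<close>. Splitting \<open>(1-k+a-b-c)_i\<close> by Chu--Vandermonde into \<open>(-k)_j\<close> and
  \<open>(1+a-b-c)_(i-j)\<close> and swapping the two sums, each inner sum is a terminating balanced \<open>3F2(1)\<close>,
  evaluated by the Pfaff--Saalschuetz theorem; what remains is the coefficient of \<open>x^n\<close> on the
  right.\<close>

lemma pochhammer_Suc_shift: "z = c \<Longrightarrow> z + 1 = w \<Longrightarrow> pochhammer z (Suc r) = c * pochhammer w r"
  by (simp add: pochhammer_rec)

lemma saalschuetz_recurrence_identity:
  fixes B0 B1 m r al be ga :: "'a::field_char_0"
  assumes "B1 * (r + 1) = B0 * m" and "r + 1 \<noteq> 0"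
  shows "- (B0 + B1) * (ga + m + r) * (al + be - ga - r) - (ga - al + (m + r)) * (ga - be + (m + r)) * B0
       = - B0 * (al + m) * (be + m) - B1 * (ga + m - 1) * (al + be - ga - r)"
proof -
  \<comment> \<open>a polynomial identity once \<open>B1\<close> is eliminated\<close>
  have "(r + 1) * ((- (B0 + B1) * (ga + m + r) * (al + be - ga - r) - (ga - al + (m + r)) * (ga - be + (m + r)) * B0)
       - (- B0 * (al + m) * (be + m) - B1 * (ga + m - 1) * (al + be - ga - r))) = 0"
    using assms(1) by algebra
  with assms(2) show ?thesis
    by simp
qed

definition saalschuetz_term :: "'a::comm_ring_1 \<Rightarrow> 'a \<Rightarrow> 'a \<Rightarrow> nat \<Rightarrow> nat \<Rightarrow> 'a" where
  "saalschuetz_term al be ga n m = (-1)^m * of_nat (n choose m) * pochhammer al m * pochhammer be m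
     * pochhammer (ga + of_nat m) (n - m) * pochhammer (1 + al + be - ga - of_nat n + of_nat m) (n - m)"

text \<open>A WZ certificate: the recurrence below makes the sum over \<open>m\<close> telescope.\<close>
definition saalschuetz_cert :: "'a::comm_ring_1 \<Rightarrow> 'a \<Rightarrow> 'a \<Rightarrow> nat \<Rightarrow> nat \<Rightarrow> 'a" where
  "saalschuetz_cert al be ga n m = (if m = 0 then 0 else
     (-1)^m * of_nat (n choose (m - 1)) * pochhammer al m * pochhammer be m
     * pochhammer (ga + of_nat m - 1) (Suc n - m) * pochhammer (al + be - ga - of_nat n + of_nat m) (Suc n - m))"

lemma saalschuetz_term_recurrence:
  fixes al be ga :: "'a::field_char_0"
  assumes "m \<le> Suc n"
  shows "- saalschuetz_term al be ga (Suc n) m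
           - (ga - al + of_nat n) * (ga - be + of_nat n) * saalschuetz_term al be ga n m
       = saalschuetz_cert al be ga n (Suc m) - saalschuetz_cert al be ga n m"
    (is "?lhs = ?rhs")
proof -
  consider "m = Suc n" | "m = 0" | m' where "m = Suc m'" "m \<le> n"
    using assms by (cases m) (auto simp: le_Suc_eq)
  then show ?thesis
  proof cases
    case 1
    then show ?thesis by (simp add: saalschuetz_term_def saalschuetz_cert_def)
  next
    case 2
    define X where "X = pochhammer (1 + al + be - ga - of_nat n) n"
    have "pochhammer (1 + al + be - ga - of_nat (Suc n)) (Suc n) = (al + be - ga - of_nat n) * X"
      unfolding X_def by (rule pochhammer_Suc_shift) (simp_all add: algebra_simps)
    then have t1: "saalschuetz_term al be ga (Suc n) 0
        = pochhammer ga n * (ga + of_nat n) * ((al + be - ga - of_nat n) * X)"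
      by (simp add: saalschuetz_term_def pochhammer_Suc del: of_nat_Suc)
    have "pochhammer (al + be - ga - of_nat n + 1) n = X"
      unfolding X_def by (simp add: algebra_simps)
    then have t2: "saalschuetz_cert al be ga n (Suc 0) = - (al * be * pochhammer ga n * X)"
      by (simp add: saalschuetz_cert_def)
    have t3: "saalschuetz_term al be ga n 0 = pochhammer ga n * X"
      by (simp add: saalschuetz_term_def X_def)
    have t4: "saalschuetz_cert al be ga n 0 = 0"
      by (simp add: saalschuetz_cert_def)
    show ?thesis
      unfolding 2 t1 t2 t3 t4 by algebra
  next
    case 3
    obtain r where nr: "n = m + r" using 3 le_Suc_ex by blast
    define P where "P = (-1)^m * pochhammer al m * pochhammer be m"
    define X1 where "X1 = pochhammer (ga + of_nat m) r"
    define X2 where "X2 = pochhammer (1 + al + be - ga - of_nat n + of_nat m) r"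
    define B0 where "B0 = (of_nat (n choose m) :: 'a)"
    define B1 where "B1 = (of_nat (n choose m') :: 'a)"
    have q: "Suc n - m = Suc r" "n - m = r" "Suc n - Suc m = r" using nr by auto
    have nn: "(of_nat n :: 'a) = of_nat m + of_nat r" using nr by simp
    have sh: "pochhammer (1 + al + be - ga - of_nat (Suc n) + of_nat m) (Suc r) = (al + be - ga - of_nat r) * X2"
             "pochhammer (al + be - ga - of_nat n + of_nat m) (Suc r) = (al + be - ga - of_nat r) * X2"
             "pochhammer (ga + of_nat m - 1) (Suc r) = (ga + of_nat m - 1) * X1"
      unfolding X1_def X2_def by (rule pochhammer_Suc_shift; simp add: nn algebra_simps)+
    have s1: "saalschuetz_term al be ga (Suc n) m
        = (B0 + B1) * P * (X1 * (ga + of_nat m + of_nat r)) * ((al + be - ga - of_nat r) * X2)"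
      using 3 unfolding saalschuetz_term_def q sh B0_def B1_def P_def X1_def
      by (simp add: pochhammer_Suc algebra_simps)
    have s2: "saalschuetz_term al be ga n m = B0 * P * X1 * X2"
      unfolding saalschuetz_term_def q B0_def P_def X1_def X2_def by (simp add: algebra_simps)
    have s3: "saalschuetz_cert al be ga n (Suc m) = - (B0 * P * (al + of_nat m) * (be + of_nat m) * X1 * X2)"
    proof -
      have "pochhammer (ga + of_nat (Suc m) - 1) r = X1"
           "pochhammer (al + be - ga - of_nat n + of_nat (Suc m)) r = X2"
        unfolding X1_def X2_def by (simp_all add: algebra_simps)
      then show ?thesis unfolding saalschuetz_cert_def q B0_def P_def
        by (simp add: pochhammer_Suc algebra_simps del: of_nat_Suc)
    qed
    have s4: "saalschuetz_cert al be ga n m = B1 * P * ((ga + of_nat m - 1) * X1) * ((al + be - ga - of_nat r) * X2)"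
      using 3 unfolding saalschuetz_cert_def q sh B1_def P_def by (simp add: algebra_simps)
    have "(n choose m') * (r + 1) = (n choose m) * m"
      using binomial_absorb_comp[of n m'] binomial_absorption[of m' n] 3 nr by (simp add: mult.commute)
    then have rel: "B1 * (of_nat r + 1) = B0 * of_nat m"
      unfolding B0_def B1_def by (metis of_nat_1 of_nat_add of_nat_mult)
    have "(of_nat r + 1 :: 'a) \<noteq> 0"
      using of_nat_neq_0[of r] by (simp add: add.commute)
    with rel have "- (B0 + B1) * (ga + of_nat m + of_nat r) * (al + be - ga - of_nat r)
        - (ga - al + (of_nat m + of_nat r)) * (ga - be + (of_nat m + of_nat r)) * B0
      = - B0 * (al + of_nat m) * (be + of_nat m) - B1 * (ga + of_nat m - 1) * (al + be - ga - of_nat r)"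
      by (rule saalschuetz_recurrence_identity)
    moreover have "?lhs - ?rhs = P * X1 * X2 * ((- (B0 + B1) * (ga + of_nat m + of_nat r) * (al + be - ga - of_nat r)
        - (ga - al + (of_nat m + of_nat r)) * (ga - be + (of_nat m + of_nat r)) * B0)
      - (- B0 * (al + of_nat m) * (be + of_nat m) - B1 * (ga + of_nat m - 1) * (al + be - ga - of_nat r)))"
      unfolding s1 s2 s3 s4 nn by (simp add: algebra_simps)
    ultimately show ?thesis
      by simp
  qed
qed

lemma saalschuetz_sum:
  fixes al be ga :: "'a::field_char_0"
  shows "(\<Sum>m\<le>n. saalschuetz_term al be ga n m) = (-1)^n * pochhammer (ga - al) n * pochhammer (ga - be) n"
proof (induction n)
  case 0
  then show ?case by (simp add: saalschuetz_term_def)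
next
  case (Suc n)
  let ?t = "saalschuetz_term al be ga" and ?c = "saalschuetz_cert al be ga n"
  let ?q = "(ga - al + of_nat n) * (ga - be + of_nat n)"
  have "- (\<Sum>m<Suc (Suc n). ?t (Suc n) m) - ?q * (\<Sum>m<Suc (Suc n). ?t n m)
      = (\<Sum>m<Suc (Suc n). - ?t (Suc n) m - ?q * ?t n m)"
    by (simp only: sum_subtractf sum_negf sum_distrib_left)
  also have "\<dots> = (\<Sum>m<Suc (Suc n). ?c (Suc m) - ?c m)"
    by (rule sum.cong) (auto intro!: saalschuetz_term_recurrence)
  also have "\<dots> = 0"
    by (simp only: sum_lessThan_telescope) (simp add: saalschuetz_cert_def)
  finally have "(\<Sum>m<Suc (Suc n). ?t (Suc n) m) = - ?q * (\<Sum>m<Suc (Suc n). ?t n m)"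
    by (simp add: algebra_simps eq_neg_iff_add_eq_0)
  moreover have "(\<Sum>m<Suc (Suc n). ?t n m) = (\<Sum>m\<le>n. ?t n m)"
    by (simp add: lessThan_Suc_atMost[symmetric] saalschuetz_term_def)
  moreover have "(\<Sum>m\<le>Suc n. ?t (Suc n) m) = (\<Sum>m<Suc (Suc n). ?t (Suc n) m)"
    by (simp only: lessThan_Suc_atMost)
  ultimately have "(\<Sum>m\<le>Suc n. ?t (Suc n) m) = - ?q * (\<Sum>m\<le>n. ?t n m)"
    by (simp only:)
  then show ?case
    by (simp add: Suc.IH pochhammer_Suc algebra_simps)
qed

lemma pfaff_saalschuetz:
  fixes A b c :: "'a::field_char_0"
  shows "(\<Sum>m\<le>N. (-1)^m * of_nat (N choose m) * pochhammer (A + of_nat N) m * pochhammer (1 + A - b - c) m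
            * pochhammer (1 + A - b + of_nat m) (N - m) * pochhammer (1 + A - c + of_nat m) (N - m))
       = pochhammer b N * pochhammer c N"
proof -
  have "pochhammer (1 + A - c + of_nat m) (N - m)
      = pochhammer (1 + (A + of_nat N) + (1 + A - b - c) - (1 + A - b) - of_nat N + of_nat m) (N - m)" for m
    by (simp add: algebra_simps)
  then have "(\<Sum>m\<le>N. (-1)^m * of_nat (N choose m) * pochhammer (A + of_nat N) m * pochhammer (1 + A - b - c) m
            * pochhammer (1 + A - b + of_nat m) (N - m) * pochhammer (1 + A - c + of_nat m) (N - m))
      = (\<Sum>m\<le>N. saalschuetz_term (A + of_nat N) (1 + A - b - c) (1 + A - b) N m)"
    by (simp add: saalschuetz_term_def algebra_simps)
  also have "\<dots> = (-1)^N * pochhammer (- b - of_nat N + 1) N * pochhammer c N"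
    unfolding saalschuetz_sum by (simp add: algebra_simps)
  also have "\<dots> = pochhammer b N * pochhammer c N"
    by (simp add: pochhammer_minus' flip: power_mult_distrib)
  finally show ?thesis .
qed

lemma saalschuetz_shifted_sum:
  fixes a b c d :: "'a::field_char_0"
  assumes "j \<le> n"
  shows "(\<Sum>m\<le>n - j. (-1)^(j + m) * of_nat (n choose (j + m)) * of_nat ((j + m) choose j)
            * pochhammer a (n + (j + m)) * pochhammer d j * pochhammer (1 + a - b - c) m
            * pochhammer (1 + a - b + of_nat (j + m)) (n - (j + m))
            * pochhammer (1 + a - c + of_nat (j + m)) (n - (j + m)))
       = (-1)^j * of_nat (n choose j) * pochhammer a (n + j) * pochhammer d j
            * pochhammer (b + of_nat j) (n - j) * pochhammer (c + of_nat j) (n - j)"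
    (is "sum ?s {..n - j} = ?rhs")
proof -
  define N where "N = n - j"
  define A where "A = a + 2 * of_nat j"
  define K where "K = (-1)^j * of_nat (n choose j) * pochhammer a (n + j) * pochhammer d j"
  let ?t = "\<lambda>m. (-1)^m * of_nat (N choose m) * pochhammer (A + of_nat N) m
          * pochhammer (1 + A - (b + of_nat j) - (c + of_nat j)) m
          * pochhammer (1 + A - (b + of_nat j) + of_nat m) (N - m)
          * pochhammer (1 + A - (c + of_nat j) + of_nat m) (N - m)"
  have n: "n = j + N" using assms by (simp add: N_def)
  have "?s m = K * ?t m" if "m \<le> N" for m
  proof -
    have "of_nat (n choose (j + m)) * of_nat ((j + m) choose j) = (of_nat (n choose j) * of_nat (N choose m) :: 'a)"
      using choose_mult[of j "j + m" n] that n by (simp flip: of_nat_mult)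
    moreover have "pochhammer a (n + (j + m)) = pochhammer a (n + j) * pochhammer (A + of_nat N) m"
      using pochhammer_product'[of a "n + j" m] by (simp add: n A_def add.assoc algebra_simps)
    moreover have "1 + A - (b + of_nat j) - (c + of_nat j) = 1 + a - b - c"
                  "1 + A - (b + of_nat j) + of_nat m = 1 + a - b + of_nat (j + m)"
                  "1 + A - (c + of_nat j) + of_nat m = 1 + a - c + of_nat (j + m)"
                  "N - m = n - (j + m)"
      by (simp_all add: A_def n algebra_simps)
    ultimately show ?thesis
      by (simp add: K_def power_add algebra_simps)
  qed
  then have "sum ?s {..n - j} = K * (\<Sum>m\<le>N. ?t m)"
    unfolding sum_distrib_left N_def[symmetric] by (intro sum.cong) auto
  also have "\<dots> = K * (pochhammer (b + of_nat j) N * pochhammer (c + of_nat j) N)"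
    by (simp only: pfaff_saalschuetz)
  finally show ?thesis
    by (simp add: K_def N_def)
qed

lemma saalschuetz_vandermonde_sum:
  fixes a b c d :: "'a::field_char_0"
  shows "(\<Sum>i\<le>n. (-1)^i * of_nat (n choose i) * pochhammer a (n + i) * pochhammer (1 + d + a - b - c) i
            * pochhammer (1 + a - b + of_nat i) (n - i) * pochhammer (1 + a - c + of_nat i) (n - i))
       = (\<Sum>j\<le>n. (-1)^j * of_nat (n choose j) * pochhammer a (n + j) * pochhammer d j
            * pochhammer (b + of_nat j) (n - j) * pochhammer (c + of_nat j) (n - j))"
proof -
  define T where "T i j = (-1)^i * of_nat (n choose i) * of_nat (i choose j) * pochhammer a (n + i)
      * pochhammer d j * pochhammer (1 + a - b - c) (i - j)
      * pochhammer (1 + a - b + of_nat i) (n - i) * pochhammer (1 + a - c + of_nat i) (n - i)" for i j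
  have "pochhammer (1 + d + a - b - c) i
      = (\<Sum>j\<le>i. of_nat (i choose j) * pochhammer d j * pochhammer (1 + a - b - c) (i - j))" for i
    using pochhammer_binomial_sum[of d "1 + a - b - c" i] by (simp add: algebra_simps)
  then have "(\<Sum>i\<le>n. (-1)^i * of_nat (n choose i) * pochhammer a (n + i) * pochhammer (1 + d + a - b - c) i
            * pochhammer (1 + a - b + of_nat i) (n - i) * pochhammer (1 + a - c + of_nat i) (n - i))
      = (\<Sum>i\<le>n. \<Sum>j\<le>i. T i j)"
    by (simp add: T_def sum_distrib_left sum_distrib_right algebra_simps)
  also have "\<dots> = (\<Sum>j\<le>n. \<Sum>i=j..n. T i j)"
  proof -
    have "{j. j \<in> {..n} \<and> j \<le> i} = {..i}" "{i. i \<in> {..n} \<and> j \<le> i} = {j..n}" if "i \<le> n" for i j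
      using that by auto
    then show ?thesis
      using sum.swap_restrict[of "{..n}" "{..n}" T "\<lambda>i j. j \<le> i"] by auto
  qed
  also have "\<dots> = (\<Sum>j\<le>n. (-1)^j * of_nat (n choose j) * pochhammer a (n + j) * pochhammer d j
            * pochhammer (b + of_nat j) (n - j) * pochhammer (c + of_nat j) (n - j))"
  proof (rule sum.cong[OF refl])
    fix j assume "j \<in> {..n}"
    then have "j \<le> n" by simp
    then have "(\<Sum>i=j..n. T i j) = (\<Sum>m\<le>n - j. T (j + m) j)"
      by (simp add: sum.atLeastAtMost_shift_0 atLeast0AtMost add.commute)
    also have "\<dots> = (-1)^j * of_nat (n choose j) * pochhammer a (n + j) * pochhammer d j
            * pochhammer (b + of_nat j) (n - j) * pochhammer (c + of_nat j) (n - j)"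
      unfolding T_def add_diff_cancel_left' by (rule saalschuetz_shifted_sum[OF \<open>j \<le> n\<close>])
    finally show "(\<Sum>i=j..n. T i j) = \<dots>" .
  qed
  finally show ?thesis .
qed

lemma pochhammer_neq_0_if_not_nonpos_Int:
  assumes "(z::complex) \<notin> \<int>\<^sub>\<le>\<^sub>0"
  shows "pochhammer z n \<noteq> 0"
  using assms by (auto simp: pochhammer_eq_0_iff)

lemma pochhammer_minus_of_nat: "pochhammer (- of_nat n :: 'a::field_char_0) j = (-1)^j * of_nat (n choose j) * fact j"
proof -
  have "(-1)^j * (of_nat n gchoose j) * fact j = ((-1)^j * (-1)^j) * pochhammer (- of_nat n :: 'a) j"
    by (simp add: gbinomial_pochhammer)
  then show ?thesis
    by (simp add: binomial_gbinomial flip: power_mult_distrib)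
qed

lemma hyp_coeff_quadratic_arg_term:
  fixes a e D E :: complex
  assumes i: "i \<le> n" and D: "D \<notin> \<int>\<^sub>\<le>\<^sub>0" and E: "E \<notin> \<int>\<^sub>\<le>\<^sub>0"
  shows "hyp_coeff [a/2, 1/2 + a/2, e] [D, E] i * (-4)^i * (pochhammer (a + 2 * of_nat i) (n - i) / fact (n - i))
       = (-1)^i * of_nat (n choose i) * pochhammer a (n + i) * pochhammer e i
            * pochhammer (D + of_nat i) (n - i) * pochhammer (E + of_nat i) (n - i)
           / (fact n * pochhammer D n * pochhammer E n)"
proof -
  have "pochhammer (a/2) i * pochhammer (1/2 + a/2) i * 4^i = pochhammer a (2*i)"
    using pochhammer_double[of "a/2" i]
    by (simp add: power_mult add.commute mult.commute power2_eq_square flip: power_mult_distrib)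
  moreover have "pochhammer a (2*i) * pochhammer (a + 2 * of_nat i) (n - i) = pochhammer a (n + i)"
    using pochhammer_product'[of a "2*i" "n - i"] i by (simp add: add.commute)
  ultimately have a: "pochhammer (a/2) i * pochhammer (1/2 + a/2) i * 4^i * pochhammer (a + 2 * of_nat i) (n - i)
      = pochhammer a (n + i)"
    by simp
  have DE: "pochhammer D n = pochhammer D i * pochhammer (D + of_nat i) (n - i)"
           "pochhammer E n = pochhammer E i * pochhammer (E + of_nat i) (n - i)"
    using pochhammer_product[OF i] by blast+
  moreover have "pochhammer D n \<noteq> 0" "pochhammer E n \<noteq> 0"
    using D E by (simp_all add: pochhammer_neq_0_if_not_nonpos_Int)
  ultimately have nz: "pochhammer D i \<noteq> 0" "pochhammer (D + of_nat i) (n - i) \<noteq> 0"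
    "pochhammer E i \<noteq> 0" "pochhammer (E + of_nat i) (n - i) \<noteq> 0"
    by auto
  have "(of_nat (fact i * fact (n - i) * (n choose i)) :: complex) = of_nat (fact n)"
    using binomial_fact_lemma[OF i] by (simp only:)
  then have fact: "(fact n :: complex) = of_nat (n choose i) * fact i * fact (n - i)"
    by (simp add: mult_ac)
  have "(-4::complex)^i = (-1)^i * 4^i"
    by (simp flip: power_mult_distrib)
  then have "hyp_coeff [a/2, 1/2 + a/2, e] [D, E] i * (-4)^i * (pochhammer (a + 2 * of_nat i) (n - i) / fact (n - i))
      = (-1)^i * (pochhammer (a/2) i * pochhammer (1/2 + a/2) i * 4^i * pochhammer (a + 2 * of_nat i) (n - i))
          * pochhammer e i / (fact i * fact (n - i) * pochhammer D i * pochhammer E i)"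
    by (simp add: hyp_coeff_def mult_ac)
  also have "\<dots> = (-1)^i * of_nat (n choose i) * pochhammer a (n + i) * pochhammer e i
            * pochhammer (D + of_nat i) (n - i) * pochhammer (E + of_nat i) (n - i)
           / (fact n * pochhammer D n * pochhammer E n)"
    unfolding a fact DE using nz i by (simp add: field_simps)
  finally show ?thesis .
qed

lemma hyp_coeff_mult_Qk2:
  fixes a b c D E :: complex
  assumes b: "b \<notin> \<int>\<^sub>\<le>\<^sub>0" and c: "c \<notin> \<int>\<^sub>\<le>\<^sub>0"
  shows "hyp_coeff [a, b, c] [D, E] n * Qk2 k n a b c
    = (\<Sum>j\<le>n. (-1)^j * of_nat (n choose j) * pochhammer a (n + j) * pochhammer (- of_nat k) j
            * pochhammer (b + of_nat j) (n - j) * pochhammer (c + of_nat j) (n - j))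
      / (fact n * pochhammer D n * pochhammer E n)"
proof -
  define u where "u j = (-1)^j * of_nat (n choose j) * pochhammer a (n + j) * pochhammer (- of_nat k) j
            * pochhammer (b + of_nat j) (n - j) * pochhammer (c + of_nat j) (n - j)" for j
  define f where "f j = pochhammer a n * pochhammer b n * pochhammer c n
       * hyp_coeff [- of_nat n, of_nat n + a, - of_nat k] [b, c] j" for j
  have fu: "f j = u j" if j: "j \<le> n" for j
  proof -
    have "pochhammer a (n + j) = pochhammer a n * pochhammer (of_nat n + a) j"
      by (subst add.commute[of "of_nat n"]) (rule pochhammer_product')
    moreover have "pochhammer b n = pochhammer b j * pochhammer (b + of_nat j) (n - j)"
                  "pochhammer c n = pochhammer c j * pochhammer (c + of_nat j) (n - j)"
      using pochhammer_product[OF j] by blast+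
    moreover have "pochhammer b j \<noteq> 0" "pochhammer c j \<noteq> 0"
      using b c by (simp_all add: pochhammer_neq_0_if_not_nonpos_Int)
    ultimately show ?thesis
      unfolding f_def u_def hyp_coeff_def by (simp add: field_simps pochhammer_minus_of_nat[of n j])
  qed
  \<comment> \<open>both sums really run over \<open>j \<le> min k n\<close>: \<open>(-n)\<^sub>j\<close> and \<open>(-k)\<^sub>j\<close> vanish beyond\<close>
  have "(\<Sum>j=0..k. f j) = (\<Sum>j\<le>n. u j)"
  proof -
    have "(\<Sum>j=0..k. f j) = (\<Sum>j\<in>{..k} \<inter> {..n}. f j)"
      by (rule sum.mono_neutral_right) (auto simp: f_def hyp_coeff_def pochhammer_of_nat_eq_0_lemma)
    also have "\<dots> = (\<Sum>j\<in>{..k} \<inter> {..n}. u j)"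
      using fu by (intro sum.cong) auto
    also have "\<dots> = (\<Sum>j\<le>n. u j)"
      by (rule sum.mono_neutral_left) (auto simp: u_def pochhammer_of_nat_eq_0_lemma)
    finally show ?thesis .
  qed
  moreover have "hyp_coeff [a, b, c] [D, E] n * Qk2 k n a b c
      = (\<Sum>j=0..k. f j) / (fact n * pochhammer D n * pochhammer E n)"
    unfolding Qk2_def f_def by (simp add: hyp_coeff_def sum_distrib_left sum_divide_distrib mult_ac)
  ultimately show ?thesis
    by (simp add: u_def)
qed

lemma quadratic_transformation_coeff:
  fixes a b c :: complex
  assumes b: "b \<notin> \<int>\<^sub>\<le>\<^sub>0" and c: "c \<notin> \<int>\<^sub>\<le>\<^sub>0"
    and D: "1 + a - b \<notin> \<int>\<^sub>\<le>\<^sub>0" and E: "1 + a - c \<notin> \<int>\<^sub>\<le>\<^sub>0"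
  shows "(\<Sum>i\<le>n. hyp_coeff [a/2, 1/2 + a/2, 1 - of_nat k + a - b - c] [1 + a - b, 1 + a - c] i * (-4)^i
           * (pochhammer (a + 2 * of_nat i) (n - i) / fact (n - i)))
       = hyp_coeff [a, b, c] [1 + a - b, 1 + a - c] n * Qk2 k n a b c"
proof -
  have "1 - of_nat k + a - b - c = 1 + (- of_nat k) + a - b - c"
    by simp
  then have "(\<Sum>i\<le>n. (-1)^i * of_nat (n choose i) * pochhammer a (n + i) * pochhammer (1 - of_nat k + a - b - c) i
            * pochhammer (1 + a - b + of_nat i) (n - i) * pochhammer (1 + a - c + of_nat i) (n - i))
      = (\<Sum>j\<le>n. (-1)^j * of_nat (n choose j) * pochhammer a (n + j) * pochhammer (- of_nat k) j
            * pochhammer (b + of_nat j) (n - j) * pochhammer (c + of_nat j) (n - j))"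
    by (simp only: saalschuetz_vandermonde_sum)
  moreover have "(\<Sum>i\<le>n. hyp_coeff [a/2, 1/2 + a/2, 1 - of_nat k + a - b - c] [1 + a - b, 1 + a - c] i * (-4)^i
           * (pochhammer (a + 2 * of_nat i) (n - i) / fact (n - i)))
      = (\<Sum>i\<le>n. (-1)^i * of_nat (n choose i) * pochhammer a (n + i) * pochhammer (1 - of_nat k + a - b - c) i
            * pochhammer (1 + a - b + of_nat i) (n - i) * pochhammer (1 + a - c + of_nat i) (n - i))
        / (fact n * pochhammer (1 + a - b) n * pochhammer (1 + a - c) n)"
    unfolding sum_divide_distrib using D E
    by (intro sum.cong refl hyp_coeff_quadratic_arg_term) auto
  ultimately show ?thesis
    by (simp only: hyp_coeff_mult_Qk2[OF b c])
qed

definition fps_binomial_neg :: "'a::field_char_0 \<Rightarrow> 'a fps" where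
  "fps_binomial_neg c = fps_binomial c oo - fps_X"

lemma fps_binomial_neg_nth: "fps_nth (fps_binomial_neg c) n = pochhammer (- c) n / fact n"
  by (simp add: fps_binomial_neg_def fps_compose_uminus' gbinomial_pochhammer flip: power_mult_distrib)

lemma fps_binomial_neg_add_mult: "fps_binomial_neg (c + d) = fps_binomial_neg c * fps_binomial_neg d"
  by (simp add: fps_binomial_neg_def fps_binomial_add_mult fps_compose_mult_distrib)

lemma fps_binomial_neg_power: "fps_binomial_neg c ^ n = fps_binomial_neg (of_nat n * c)"
  by (simp add: fps_binomial_neg_def fps_compose_power fps_binomial_power)

lemma has_fps_expansion_one_minus_powr: "(\<lambda>x::complex. (1 - x) powr c) has_fps_expansion fps_binomial_neg c"
proof -
  have "((\<lambda>x. (1 + x) powr c) \<circ> uminus) has_fps_expansion fps_binomial_neg c"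
    unfolding fps_binomial_neg_def
    by (intro has_fps_expansion_compose has_fps_expansion_binomial_complex has_fps_expansion_minus
          has_fps_expansion_fps_X) simp
  then show ?thesis
    by (simp add: comp_def)
qed

definition fps_quadratic_arg :: "'a::field_char_0 fps" where
  "fps_quadratic_arg = fps_const (-4) * fps_X * fps_binomial_neg (-2)"

lemma fps_quadratic_arg_nth_0 [simp]: "fps_nth fps_quadratic_arg 0 = 0"
  by (simp add: fps_quadratic_arg_def)

lemma has_fps_expansion_quadratic_arg:
  "(\<lambda>x::complex. - 4 * x / (1 - x)^2) has_fps_expansion fps_quadratic_arg"
proof -
  have "(\<lambda>x::complex. - 4 * (x * (1 - x) powr (-2))) has_fps_expansion fps_quadratic_arg"
    unfolding fps_quadratic_arg_def mult.assoc
    by (intro has_fps_expansion_cmult_left has_fps_expansion_mult has_fps_expansion_fps_X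
          has_fps_expansion_one_minus_powr)
  moreover have "eventually (\<lambda>x::complex. x \<in> ball 0 1) (nhds 0)"
    by (intro eventually_nhds_in_open) auto
  then have "eventually (\<lambda>x::complex. - 4 * (x * (1 - x) powr (-2)) = - 4 * x / (1 - x)^2) (nhds 0)"
    by (rule eventually_mono) (auto simp: powr_minus divide_inverse powr_nat' simp del: powr_minus_divide)
  ultimately show ?thesis
    by (subst (asm) has_fps_expansion_cong) auto
qed

lemma fps_quadratic_arg_power_mult_nth:
  "fps_nth (fps_quadratic_arg ^ i * fps_binomial_neg (- a)) n
     = (if n < i then 0 else (-4)^i * (pochhammer (a + 2 * of_nat i) (n - i) / fact (n - i)))"
proof -
  have "fps_quadratic_arg ^ i * fps_binomial_neg (- a)
      = fps_const ((-4)^i) * (fps_X ^ i * fps_binomial_neg (- a - 2 * of_nat i))"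
    by (simp add: fps_quadratic_arg_def power_mult_distrib fps_binomial_neg_power fps_const_power
        mult_ac flip: fps_binomial_neg_add_mult)
  then show ?thesis
    by (simp add: fps_X_power_mult_nth fps_binomial_neg_nth add.commute)
qed

lemma fps_compose_mult_nth:
  fixes F G P :: "'a::comm_ring_1 fps"
  assumes "fps_nth G 0 = 0"
  shows "fps_nth ((F oo G) * P) n = (\<Sum>i\<le>n. fps_nth F i * fps_nth (G ^ i * P) n)"
proof -
  have "fps_nth ((F oo G) * P) n
      = (\<Sum>m=0..n. \<Sum>i\<le>n. fps_nth F i * fps_nth (G ^ i) m * fps_nth P (n - m))"
  proof (unfold fps_mult_nth, rule sum.cong[OF refl])
    fix m assume "m \<in> {0..n}"
    then have "fps_nth (F oo G) m = (\<Sum>i\<le>n. fps_nth F i * fps_nth (G ^ i) m)"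
      unfolding fps_compose_nth
      by (intro sum.mono_neutral_left) (auto simp: startsby_zero_power_prefix[OF assms])
    then show "fps_nth (F oo G) m * fps_nth P (n - m)
        = (\<Sum>i\<le>n. fps_nth F i * fps_nth (G ^ i) m * fps_nth P (n - m))"
      by (simp add: sum_distrib_right)
  qed
  also have "\<dots> = (\<Sum>i\<le>n. fps_nth F i * fps_nth (G ^ i * P) n)"
    by (subst sum.swap) (simp add: fps_mult_nth sum_distrib_left mult.assoc)
  finally show ?thesis .
qed

lemma quadratic_transformation_fps:
  fixes a b c :: complex
  assumes "b \<notin> \<int>\<^sub>\<le>\<^sub>0" and "c \<notin> \<int>\<^sub>\<le>\<^sub>0" and "1 + a - b \<notin> \<int>\<^sub>\<le>\<^sub>0" and "1 + a - c \<notin> \<int>\<^sub>\<le>\<^sub>0"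
  shows "(Abs_fps (hyp_coeff [a/2, 1/2 + a/2, 1 - of_nat k + a - b - c] [1 + a - b, 1 + a - c])
            oo fps_quadratic_arg) * fps_binomial_neg (- a)
       = Abs_fps (\<lambda>n. hyp_coeff [a, b, c] [1 + a - b, 1 + a - c] n * Qk2 k n a b c)"
proof (rule fps_ext)
  fix n
  show "fps_nth ((Abs_fps (hyp_coeff [a/2, 1/2 + a/2, 1 - of_nat k + a - b - c] [1 + a - b, 1 + a - c])
            oo fps_quadratic_arg) * fps_binomial_neg (- a)) n
       = fps_nth (Abs_fps (\<lambda>n. hyp_coeff [a, b, c] [1 + a - b, 1 + a - c] n * Qk2 k n a b c)) n"
    by (simp add: fps_compose_mult_nth fps_quadratic_arg_power_mult_nth mult.assoc
        flip: quadratic_transformation_coeff[OF assms])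
qed

lemma prod_list_map_mult: "(\<Prod>x\<leftarrow>xs. f x * g x) = (\<Prod>x\<leftarrow>xs. f x) * (\<Prod>x\<leftarrow>xs. (g x :: 'a::comm_monoid_mult))"
  by (induction xs) (simp_all add: mult_ac)

lemma hyp_coeff_Suc:
  "hyp_coeff as bs (Suc n)
     = hyp_coeff as bs n * ((\<Prod>a\<leftarrow>as. a + of_nat n) / ((of_nat n + 1) * (\<Prod>b\<leftarrow>bs. b + of_nat n)))"
  by (simp add: hyp_coeff_def pochhammer_Suc prod_list_map_mult times_divide_times_eq mult_ac)

lemma norm_prod_list_add_of_nat_le:
  "norm (\<Prod>a\<leftarrow>as. a + of_nat n :: complex) \<le> (\<Prod>a\<leftarrow>as. 1 + norm a) * (real n + 1) ^ length as"
proof (induction as)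
  case (Cons a as)
  have "norm (a + of_nat n) \<le> norm a + real n"
    using norm_triangle_ineq[of a "of_nat n"] by simp
  also have "\<dots> \<le> (1 + norm a) * (real n + 1)"
    using mult_nonneg_nonneg[of "real n" "norm a"] by (simp add: algebra_simps)
  finally have "norm (a + of_nat n) \<le> (1 + norm a) * (real n + 1)" .
  from mult_mono[OF this Cons.IH _ norm_ge_zero] show ?case
    by (simp add: norm_mult mult_ac)
qed simp

lemma norm_prod_list_add_of_nat_ge:
  assumes "\<forall>b\<in>set bs. 2 * norm b + 1 \<le> real n"
  shows "((real n + 1) / 2) ^ length bs \<le> norm (\<Prod>b\<leftarrow>bs. b + of_nat n :: complex)"
  using assms
proof (induction bs)
  case (Cons b bs)
  have "(real n + 1) / 2 \<le> real n - norm b"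
    using Cons.prems by simp
  also have "\<dots> \<le> norm (b + of_nat n)"
    using norm_triangle_ineq4[of "b + of_nat n" b] by simp
  finally have "(real n + 1) / 2 \<le> norm (b + of_nat n)" .
  then show ?case
    using Cons mult_mono[of "(real n + 1) / 2" "norm (b + of_nat n)"] by (simp add: norm_mult)
qed simp

lemma fps_conv_radius_pos_of_ratio_bound:
  fixes f :: "nat \<Rightarrow> complex"
  assumes "eventually (\<lambda>n. norm (f (Suc n)) \<le> C * norm (f n)) sequentially"
  shows "fps_conv_radius (Abs_fps f) > 0"
proof -
  define C' where "C' = max C 1"
  obtain N where N: "\<And>n. n \<ge> N \<Longrightarrow> norm (f (Suc n)) \<le> C * norm (f n)"
    using assms by (auto simp: eventually_sequentially)
  define \<rho> where "\<rho> = 1 / (2 * C')"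
  have \<rho>: "\<rho> > 0" "C' * \<rho> = 1/2"
    by (auto simp: \<rho>_def C'_def)
  have "norm (f (Suc n) * of_real \<rho> ^ Suc n) \<le> 1/2 * norm (f n * of_real \<rho> ^ n)" if "n \<ge> N" for n
  proof -
    have "norm (f (Suc n)) \<le> C' * norm (f n)"
      using N[OF that] by (smt (verit, best) C'_def mult_right_mono norm_ge_zero)
    then have "norm (f (Suc n)) * \<rho> * \<rho> ^ n \<le> C' * \<rho> * norm (f n) * \<rho> ^ n"
      using \<rho> by (simp add: mult_right_mono mult_ac)
    then show ?thesis
      using \<rho> by (simp add: norm_mult norm_power mult_ac)
  qed
  then have "summable (\<lambda>n. f n * of_real \<rho> ^ n)"
    by (intro summable_ratio_test[of "1/2" N]) auto
  then have "ereal \<rho> \<le> conv_radius f"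
    using conv_radius_geI \<rho> by fastforce
  then show ?thesis
    using \<rho> by (simp add: fps_conv_radius_def) (meson ereal_less(2) less_le_trans)
qed

lemma fps_conv_radius_hyp_coeff_pos:
  assumes "length as \<le> Suc (length bs)"
  shows "fps_conv_radius (Abs_fps (hyp_coeff as bs)) > 0"
proof (rule fps_conv_radius_pos_of_ratio_bound)
  define K where "K = (\<Prod>a\<leftarrow>as. 1 + norm a)"
  have K: "0 \<le> K"
    unfolding K_def by (rule prod_list_nonneg) auto
  let ?q = "length bs"
  have "eventually (\<lambda>n. \<forall>b\<in>set bs. 2 * norm b + 1 \<le> real n) sequentially"
    using filterlim_real_sequentially by (intro eventually_ball_finite) (auto simp: filterlim_at_top)
  then show "eventually (\<lambda>n. norm (hyp_coeff as bs (Suc n)) \<le> K * 2 ^ ?q * norm (hyp_coeff as bs n)) sequentially"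
  proof (rule eventually_mono)
    fix n assume n: "\<forall>b\<in>set bs. 2 * norm b + 1 \<le> real n"
    define \<alpha> where "\<alpha> = (\<Prod>a\<leftarrow>as. a + of_nat n)"
    define \<beta> where "\<beta> = (\<Prod>b\<leftarrow>bs. b + of_nat n)"
    have \<beta>: "((real n + 1) / 2) ^ ?q \<le> norm \<beta>"
      unfolding \<beta>_def using n by (rule norm_prod_list_add_of_nat_ge)
    have "norm \<alpha> \<le> K * (real n + 1) ^ length as"
      unfolding \<alpha>_def K_def by (rule norm_prod_list_add_of_nat_le)
    also have "\<dots> \<le> K * (real n + 1) ^ Suc ?q"
      using assms by (intro mult_left_mono power_increasing) (auto simp: K)
    also have "\<dots> = K * 2 ^ ?q * ((real n + 1) * ((real n + 1) / 2) ^ ?q)"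
      by (simp add: power_divide)
    also have "\<dots> \<le> K * 2 ^ ?q * ((real n + 1) * norm \<beta>)"
      using \<beta> K by (intro mult_left_mono) auto
    finally have "norm \<alpha> \<le> K * 2 ^ ?q * ((real n + 1) * norm \<beta>)" .
    moreover have "0 < (real n + 1) * norm \<beta>"
      using \<beta> by (smt (verit) divide_pos_pos mult_pos_pos of_nat_0_le_iff zero_less_power)
    moreover have "(of_nat n + 1 :: complex) = of_nat (Suc n)"
      by simp
    then have "norm (of_nat n + 1 :: complex) = real n + 1"
      by (simp only: norm_of_nat)
    ultimately have "norm (\<alpha> / ((of_nat n + 1) * \<beta>)) \<le> K * 2 ^ ?q"
      by (simp add: norm_divide norm_mult pos_divide_le_eq)
    then show "norm (hyp_coeff as bs (Suc n)) \<le> K * 2 ^ ?q * norm (hyp_coeff as bs n)"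
      unfolding hyp_coeff_Suc \<alpha>_def[symmetric] \<beta>_def[symmetric] norm_mult
      by (simp add: mult_left_mono mult.commute)
  qed
qed

lemma eval_fps_compose_mult_near_0:
  fixes F Z P G :: "complex fps" and z p :: "complex \<Rightarrow> complex"
  assumes F: "fps_conv_radius F > 0"
    and Z: "z has_fps_expansion Z" "fps_nth Z 0 = 0"
    and P: "p has_fps_expansion P"
    and G: "(F oo Z) * P = G"
  shows "\<exists>r>0. \<forall>x. norm x < r \<longrightarrow> summable (\<lambda>n. fps_nth F n * z x ^ n)
           \<and> summable (\<lambda>n. fps_nth G n * x ^ n) \<and> eval_fps F (z x) * p x = eval_fps G x"
proof -
  have "(\<lambda>x. (eval_fps F \<circ> z) x * p x) has_fps_expansion G"
    unfolding G[symmetric]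
    by (intro has_fps_expansion_mult has_fps_expansion_compose eval_fps_has_fps_expansion F Z P)
  then have "fps_conv_radius G > 0" and ev_eq: "eventually (\<lambda>x. eval_fps G x = eval_fps F (z x) * p x) (nhds 0)"
    by (auto simp: has_fps_expansion_def)
  then have ev_G: "eventually (\<lambda>x. x \<in> eball 0 (fps_conv_radius G)) (nhds 0)"
    by (intro eventually_nhds_in_open) (auto simp: zero_ereal_def)
  have "z 0 = 0"
    using has_fps_expansion_imp_0_eq_fps_nth_0[OF Z(1)] Z(2) by simp
  with has_fps_expansion_imp_continuous[OF Z(1)] have "(z \<longlongrightarrow> 0) (nhds 0)"
    by (metis continuous_at tendsto_at_iff_tendsto_nhds)
  then have ev_F: "eventually (\<lambda>x. z x \<in> eball 0 (fps_conv_radius F)) (nhds 0)"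
    using F by (intro topological_tendstoD) (auto simp: zero_ereal_def)
  obtain r where "r > 0" and r: "\<And>x. dist x 0 < r \<Longrightarrow> z x \<in> eball 0 (fps_conv_radius F)
      \<and> x \<in> eball 0 (fps_conv_radius G) \<and> eval_fps G x = eval_fps F (z x) * p x"
    using eventually_conj[OF ev_F eventually_conj[OF ev_G ev_eq]] unfolding eventually_nhds_metric by blast
  show ?thesis
    using \<open>r > 0\<close> r by (intro exI[of _ r]) (auto intro!: summable_fps)
qed

theorem theorem1:
  fixes k :: nat and a b c :: complex
  assumes "b \<notin> \<int>\<^sub>\<le>\<^sub>0" and "c \<notin> \<int>\<^sub>\<le>\<^sub>0"
    and "1 + a - b \<notin> \<int>\<^sub>\<le>\<^sub>0" and "1 + a - c \<notin> \<int>\<^sub>\<le>\<^sub>0"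
  shows "\<exists>r>0. \<forall>x::complex. norm x < r \<longrightarrow>
    summable (\<lambda>n. hyp_coeff [a/2, 1/2 + a/2, 1 - of_nat k + a - b - c] [1 + a - b, 1 + a - c] n
                   * (- 4 * x / (1 - x)^2) ^ n)
  \<and> summable (\<lambda>n. hyp_coeff [a, b, c] [1 + a - b, 1 + a - c] n * Qk2 k n a b c * x ^ n)
  \<and> pFq [a/2, 1/2 + a/2, 1 - of_nat k + a - b - c] [1 + a - b, 1 + a - c] (- 4 * x / (1 - x)^2)
      = (1 - x) powr a * (\<Sum>n. hyp_coeff [a, b, c] [1 + a - b, 1 + a - c] n * Qk2 k n a b c * x ^ n)"
proof -
  define F where "F = Abs_fps (hyp_coeff [a/2, 1/2 + a/2, 1 - of_nat k + a - b - c] [1 + a - b, 1 + a - c])"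
  define G where "G = Abs_fps (\<lambda>n. hyp_coeff [a, b, c] [1 + a - b, 1 + a - c] n * Qk2 k n a b c)"
  have "fps_conv_radius F > 0"
    unfolding F_def by (rule fps_conv_radius_hyp_coeff_pos) simp
  then obtain r where "r > 0" and r: "\<And>x. norm x < r \<Longrightarrow>
      summable (\<lambda>n. fps_nth F n * (- 4 * x / (1 - x)^2) ^ n) \<and> summable (\<lambda>n. fps_nth G n * x ^ n)
      \<and> eval_fps F (- 4 * x / (1 - x)^2) * (1 - x) powr (- a) = eval_fps G x"
    using eval_fps_compose_mult_near_0[OF _ has_fps_expansion_quadratic_arg fps_quadratic_arg_nth_0
        has_fps_expansion_one_minus_powr quadratic_transformation_fps[OF assms, of k, folded F_def G_def]]
    by blast
  show ?thesis
  proof (intro exI[of _ "min r 1"] conjI[of "0 < min r 1"] allI impI)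
    fix x :: complex assume x: "norm x < min r 1"
    from r[of x] x have "eval_fps G x = eval_fps F (- 4 * x / (1 - x)^2) * (1 - x) powr (- a)"
      by simp
    then have "(1 - x) powr a * eval_fps G x
        = eval_fps F (- 4 * x / (1 - x)^2) * ((1 - x) powr a * (1 - x) powr (- a))"
      by (simp add: ac_simps)
    moreover have "(1 - x) powr a * (1 - x) powr (- a) = 1"
      using x by (auto simp: powr_add[symmetric])
    ultimately have "eval_fps F (- 4 * x / (1 - x)^2) = (1 - x) powr a * eval_fps G x"
      by simp
    with r[of x] x show "summable (\<lambda>n. hyp_coeff [a/2, 1/2 + a/2, 1 - of_nat k + a - b - c] [1 + a - b, 1 + a - c] n
                   * (- 4 * x / (1 - x)^2) ^ n)
      \<and> summable (\<lambda>n. hyp_coeff [a, b, c] [1 + a - b, 1 + a - c] n * Qk2 k n a b c * x ^ n)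
      \<and> pFq [a/2, 1/2 + a/2, 1 - of_nat k + a - b - c] [1 + a - b, 1 + a - c] (- 4 * x / (1 - x)^2)
          = (1 - x) powr a * (\<Sum>n. hyp_coeff [a, b, c] [1 + a - b, 1 + a - c] n * Qk2 k n a b c * x ^ n)"
      by (simp add: F_def G_def pFq_def eval_fps_def)
  qed (use \<open>r > 0\<close> in simp)
qed

end
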